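(* Let $n\ge1$ players all have the same valuation $v$ on a finite set of goods $M$. Assume $v$ has nonzero marginal utility: $v(S\cup\{g\})>v(S)$ for every $S\subsetneq M$ and $g\notin S$. Then every leximin solution is both EFX and Pareto optimal.
   Context: A valuation is a function $v:2^M\to\mathbb{R}_{\ge0}$ with $v(\emptyset)=0$ that is monotone: $v(S)\le v(T)$ whenever $S\subseteq T$. An allocation is an ordered partition $(A_1,\dots,A_n)$ of $M$; parts may be empty. It is EFX if for all players $i,j$ and every $g\in A_j$ we have $v_i(A_i)\ge v_i(A_j\setminus\{g\})$. It is Pareto optimal (PO) if there is no allocation $B$ with $v_i(B_i)\ge v_i(A_i)$ for all $i$ and $v_j(B_j)>v_j(A_j)$ for some $j$. For an allocation $A$, let $X^A$ be the ordering of the players by increasing utility $v_i(A_i)$, with ties broken by increasing player index. The leximin comparison is defined as follows. For allocations $A$ and $B$, let $\ell$ be the first index at which $v_{X^A_\ell}(A_{X^A_\ell})\ne v_{X^B_\ell}(B_{X^B_\ell})$. Then $A\prec B$ holds if and only if such an $\ell$ exists and $v_{X^A_\ell}(A_{X^A_\ell})< v_{X^B_\ell}(B_{X^B_\ell})$. Equivalently, the sorted utility vector of $A$ is lexicographically smaller than that of $B$. A leximin solution is an allocation $A$ with no allocation $B$ satisfying $A\prec B$. *)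

theory Defs
  imports Complex_Main
begin

definition valuation :: "'g set \<Rightarrow> ('g set \<Rightarrow> real) \<Rightarrow> bool" where
  "valuation M v \<longleftrightarrow> v {} = 0 \<and> (\<forall>S. S \<subseteq> M \<longrightarrow> v S \<ge> 0)
     \<and> (\<forall>S T. S \<subseteq> T \<and> T \<subseteq> M \<longrightarrow> v S \<le> v T)"

definition nonzero_marginal :: "'g set \<Rightarrow> ('g set \<Rightarrow> real) \<Rightarrow> bool" where
  "nonzero_marginal M v \<longleftrightarrow> (\<forall>S g. S \<subset> M \<and> g \<in> M \<and> g \<notin> S \<longrightarrow> v (S \<union> {g}) > v S)"

definition allocation :: "nat \<Rightarrow> 'g set \<Rightarrow> (nat \<Rightarrow> 'g set) \<Rightarrow> bool" where
  "allocation n M A \<longleftrightarrow> (\<Union>i<n. A i) = M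
     \<and> (\<forall>i<n. \<forall>j<n. i \<noteq> j \<longrightarrow> A i \<inter> A j = {})"

definition EFX :: "nat \<Rightarrow> (nat \<Rightarrow> 'g set \<Rightarrow> real) \<Rightarrow> (nat \<Rightarrow> 'g set) \<Rightarrow> bool" where
  "EFX n vs A \<longleftrightarrow> (\<forall>i<n. \<forall>j<n. \<forall>g\<in>A j. vs i (A i) \<ge> vs i (A j - {g}))"

definition pareto_optimal :: "nat \<Rightarrow> 'g set \<Rightarrow> (nat \<Rightarrow> 'g set \<Rightarrow> real) \<Rightarrow> (nat \<Rightarrow> 'g set) \<Rightarrow> bool" where
  "pareto_optimal n M vs A \<longleftrightarrow> \<not> (\<exists>B. allocation n M B \<and> (\<forall>i<n. vs i (B i) \<ge> vs i (A i))
        \<and> (\<exists>j<n. vs j (B j) > vs j (A j)))"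

definition util_vec :: "nat \<Rightarrow> (nat \<Rightarrow> 'g set \<Rightarrow> real) \<Rightarrow> (nat \<Rightarrow> 'g set) \<Rightarrow> real list" where
  "util_vec n vs A = sort (map (\<lambda>i. vs i (A i)) [0..<n])"

definition leximin_less :: "nat \<Rightarrow> (nat \<Rightarrow> 'g set \<Rightarrow> real) \<Rightarrow> (nat \<Rightarrow> 'g set) \<Rightarrow> (nat \<Rightarrow> 'g set) \<Rightarrow> bool" where
  "leximin_less n vs A B \<longleftrightarrow> (\<exists>l<n. (\<forall>k<l. util_vec n vs A ! k = util_vec n vs B ! k)
        \<and> util_vec n vs A ! l < util_vec n vs B ! l)"

definition leximin :: "nat \<Rightarrow> 'g set \<Rightarrow> (nat \<Rightarrow> 'g set \<Rightarrow> real) \<Rightarrow> (nat \<Rightarrow> 'g set) \<Rightarrow> bool" where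
  "leximin n M vs A \<longleftrightarrow> allocation n M A \<and> \<not> (\<exists>B. allocation n M B \<and> leximin_less n vs A B)"

end

theory Submission
  imports Defs "HOL-Library.Multiset"
begin

text \<open>Both properties follow from one comparison principle for sorted lists: if two
  lists of equal length agree (as multisets) below a value \<open>a\<close> and the first contains
  more copies of \<open>a\<close>, then the sorted first list is lexicographically smaller. Hence a
  reallocation that leaves every utility below \<open>a\<close> unchanged, lets no changed utility
  end at or below \<open>a\<close>, and lifts some player from exactly \<open>a\<close> to above \<open>a\<close> is a leximin
  improvement. For a Pareto improvement take \<open>a\<close> to be the least original utility of
  a strictly improved player. For an EFX violation \<open>v (A i) < v (A j - {g})\<close>, move
  \<open>g\<close> from \<open>j\<close> to \<open>i\<close> and take \<open>a = v (A i)\<close>: player \<open>i\<close> gains by nonzero marginal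
  utility, and player \<open>j\<close> keeps more than \<open>a\<close> because the valuation is shared.\<close>

lemma sort_split_around:
  fixes xs :: "'a::linorder list"
  shows "sort xs = sort (filter (\<lambda>x. x < a) xs) @ replicate (count_list xs a) a
                   @ sort (filter (\<lambda>x. a < x) xs)"
proof (rule properties_for_sort)
  show "mset (sort (filter (\<lambda>x. x < a) xs) @ replicate (count_list xs a) a
              @ sort (filter (\<lambda>x. a < x) xs)) = mset xs"
    by (induction xs) auto
qed (auto simp: sorted_append)

lemma sort_lex_less_if_more_copies:
  fixes xs ys :: "'a::linorder list"
  assumes len: "length xs = length ys"
    and below: "mset (filter (\<lambda>x. x < a) xs) = mset (filter (\<lambda>x. x < a) ys)"
    and copies: "count_list ys a < count_list xs a"
  shows "\<exists>l<length xs. (\<forall>k<l. sort xs ! k = sort ys ! k) \<and> sort xs ! l < sort ys ! l"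
proof -
  define P where "P = sort (filter (\<lambda>x. x < a) ys)"
  define G where "G = sort (filter (\<lambda>x. a < x) xs)"
  define G' where "G' = sort (filter (\<lambda>x. a < x) ys)"
  have "sort (filter (\<lambda>x. x < a) xs) = P"
    unfolding P_def by (rule properties_for_sort) (use below in simp_all)
  then have xs: "sort xs = P @ replicate (count_list xs a) a @ G"
    using sort_split_around[of xs a] by (simp add: G_def)
  have ys: "sort ys = P @ replicate (count_list ys a) a @ G'"
    using sort_split_around[of ys a] by (simp add: P_def G'_def)
  have "length G' > 0"
    using arg_cong[OF xs, of length] arg_cong[OF ys, of length] len copies
    by (simp only: length_append length_replicate length_sort)
  then have G'_head: "a < G' ! 0"
    using nth_mem[of 0 G'] by (simp add: G'_def)
  define l where "l = length P + count_list ys a"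
  show ?thesis
  proof (intro exI conjI allI impI)
    show "l < length xs"
      using arg_cong[OF xs, of length] copies by (simp add: l_def)
    show "sort xs ! k = sort ys ! k" if "k < l" for k
      using that copies unfolding xs ys l_def by (auto simp: nth_append)
    show "sort xs ! l < sort ys ! l"
      using copies G'_head unfolding xs ys l_def by (simp add: nth_append)
  qed
qed

lemma count_list_map_upt: "count_list (map f [0..<n]) a = card {k. k < n \<and> f k = a}"
proof -
  have "count_list (map f [0..<n]) a = length (filter (\<lambda>k. f k = a) [0..<n])"
    by (simp add: count_list_eq_length_filter filter_map comp_def eq_commute[of a])
  also have "\<dots> = card (set (filter (\<lambda>k. f k = a) [0..<n]))"
    by (rule distinct_card[symmetric]) simp
  also have "set (filter (\<lambda>k. f k = a) [0..<n]) = {k. k < n \<and> f k = a}"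
    by auto
  finally show ?thesis .
qed

lemma sort_map_upt_lex_less_if_raised:
  fixes u w :: "nat \<Rightarrow> 'a::linorder"
  assumes u_below: "\<And>k. k < n \<Longrightarrow> u k < a \<Longrightarrow> w k = u k"
    and w_below: "\<And>k. k < n \<Longrightarrow> w k \<le> a \<Longrightarrow> w k = u k"
    and raised: "k0 < n" "u k0 = a" "a < w k0"
  shows "\<exists>l<n. (\<forall>k<l. sort (map u [0..<n]) ! k = sort (map w [0..<n]) ! k)
           \<and> sort (map u [0..<n]) ! l < sort (map w [0..<n]) ! l"
proof -
  have "filter (\<lambda>x. x < a) (map u [0..<n]) = map u (filter (\<lambda>k. u k < a) [0..<n])"
    by (simp add: filter_map comp_def)
  also have "\<dots> = map w (filter (\<lambda>k. w k < a) [0..<n])"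
  proof (intro map_cong filter_cong refl)
    show "k \<in> set [0..<n] \<Longrightarrow> u k < a \<longleftrightarrow> w k < a" for k
      using u_below w_below by (metis atLeastLessThan_iff less_imp_le set_upt)
    show "k \<in> set (filter (\<lambda>k. w k < a) [0..<n]) \<Longrightarrow> u k = w k" for k
      using w_below by (simp add: less_imp_le)
  qed
  also have "\<dots> = filter (\<lambda>x. x < a) (map w [0..<n])"
    by (simp add: filter_map comp_def)
  finally have same_below:
    "filter (\<lambda>x. x < a) (map u [0..<n]) = filter (\<lambda>x. x < a) (map w [0..<n])" .
  have "{k. k < n \<and> w k = a} \<subset> {k. k < n \<and> u k = a}"
  proof
    show "{k. k < n \<and> w k = a} \<subseteq> {k. k < n \<and> u k = a}"
      using w_below by (auto intro: sym)
    have "k0 \<in> {k. k < n \<and> u k = a}" "k0 \<notin> {k. k < n \<and> w k = a}"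
      using raised by simp_all
    then show "{k. k < n \<and> w k = a} \<noteq> {k. k < n \<and> u k = a}"
      by blast
  qed
  then have fewer_copies: "count_list (map w [0..<n]) a < count_list (map u [0..<n]) a"
    by (simp add: count_list_map_upt psubset_card_mono)
  have "length (map u [0..<n]) = length (map w [0..<n])"
    by simp
  from sort_lex_less_if_more_copies[OF this arg_cong[OF same_below, of mset] fewer_copies]
  show ?thesis
    by simp
qed

lemma leximin_less_if_raised:
  assumes "\<And>k. k < n \<Longrightarrow> vs k (A k) < a \<Longrightarrow> vs k (B k) = vs k (A k)"
    and "\<And>k. k < n \<Longrightarrow> vs k (B k) \<le> a \<Longrightarrow> vs k (B k) = vs k (A k)"
    and "j < n" "vs j (A j) = a" "a < vs j (B j)"
  shows "leximin_less n vs A B"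
  unfolding leximin_less_def util_vec_def
  by (rule sort_map_upt_lex_less_if_raised[where u = "\<lambda>k. vs k (A k)" and w = "\<lambda>k. vs k (B k)"])
    (fact assms)+

lemma allocation_subset:
  "allocation n M A \<Longrightarrow> i < n \<Longrightarrow> A i \<subseteq> M"
  unfolding allocation_def by blast

lemma allocation_move_good:
  assumes "allocation n M A" "i < n" "j < n" "i \<noteq> j" "g \<in> A j"
  shows "allocation n M (A(i := A i \<union> {g}, j := A j - {g}))"
  using assms unfolding allocation_def by (auto 0 4 split: if_splits)

lemma leximin_not_less:
  "leximin n M vs A \<Longrightarrow> allocation n M B \<Longrightarrow> \<not> leximin_less n vs A B"
  unfolding leximin_def by blast

lemma leximin_imp_pareto_optimal:
  assumes leximin: "leximin n M vs A"
  shows "pareto_optimal n M vs A"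
  unfolding pareto_optimal_def
proof
  assume "\<exists>B. allocation n M B \<and> (\<forall>i<n. vs i (A i) \<le> vs i (B i))
            \<and> (\<exists>j<n. vs j (A j) < vs j (B j))"
  then obtain B j where B: "allocation n M B" and weakly: "\<forall>i<n. vs i (A i) \<le> vs i (B i)"
    and "j < n" "vs j (A j) < vs j (B j)"
    by blast
  define improved where "improved = {i. i < n \<and> vs i (A i) < vs i (B i)}"
  have "finite improved" "improved \<noteq> {}"
    using \<open>j < n\<close> \<open>vs j (A j) < vs j (B j)\<close> by (auto simp: improved_def)
  then obtain k0 where "k0 \<in> improved" and least: "\<And>k. k \<in> improved \<Longrightarrow> vs k0 (A k0) \<le> vs k (A k)"
    using arg_min_if_finite[of improved "\<lambda>k. vs k (A k)"] by (metis not_le)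
  have "leximin_less n vs A B"
  proof (rule leximin_less_if_raised[where a = "vs k0 (A k0)" and j = k0])
    have unchanged: "vs k (B k) = vs k (A k)" if "k < n" "k \<notin> improved" for k
      using that weakly[rule_format, of k] by (simp add: improved_def)
    have not_below_min: "\<not> vs k (A k) < vs k0 (A k0)" if "k \<in> improved" for k
      using least[OF that] by simp
    show "vs k (B k) = vs k (A k)" if "k < n" "vs k (A k) < vs k0 (A k0)" for k
      using that not_below_min unchanged by blast
    show "vs k (B k) = vs k (A k)" if "k < n" "vs k (B k) \<le> vs k0 (A k0)" for k
    proof (rule unchanged)
      show "k \<notin> improved"
        using that not_below_min[of k] by (auto simp: improved_def)
    qed (fact \<open>k < n\<close>)
    show "k0 < n" "vs k0 (A k0) = vs k0 (A k0)" "vs k0 (A k0) < vs k0 (B k0)"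
      using \<open>k0 \<in> improved\<close> by (simp_all add: improved_def)
  qed
  with leximin B show False
    by (simp add: leximin_not_less)
qed

lemma leximin_imp_EFX:
  assumes val: "valuation M v" and marginal: "nonzero_marginal M v"
    and leximin: "leximin n M (\<lambda>_. v) A"
  shows "EFX n (\<lambda>_. v) A"
  unfolding EFX_def
proof (intro allI impI ballI)
  fix i j g assume "i < n" "j < n" "g \<in> A j"
  have alloc: "allocation n M A"
    using leximin by (simp add: leximin_def)
  have mono: "v S \<le> v T" if "S \<subseteq> T" "T \<subseteq> M" for S T
    using val that unfolding valuation_def by blast
  have removed_le: "v (A j - {g}) \<le> v (A j)"
    using allocation_subset[OF alloc \<open>j < n\<close>] by (intro mono) auto
  show "v (A j - {g}) \<le> v (A i)"
  proof (rule ccontr)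
    assume envy: "\<not> v (A j - {g}) \<le> v (A i)"
    then have "i \<noteq> j"
      using removed_le by auto
    define B where "B = A(i := A i \<union> {g}, j := A j - {g})"
    have B: "allocation n M B"
      unfolding B_def using allocation_move_good[OF alloc \<open>i < n\<close> \<open>j < n\<close> \<open>i \<noteq> j\<close> \<open>g \<in> A j\<close>] .
    have "g \<in> M" "g \<notin> A i"
      using alloc \<open>i < n\<close> \<open>j < n\<close> \<open>i \<noteq> j\<close> \<open>g \<in> A j\<close> unfolding allocation_def by blast+
    then have "A i \<subset> M"
      using allocation_subset[OF alloc \<open>i < n\<close>] by blast
    then have gain: "v (A i) < v (A i \<union> {g})"
      using marginal \<open>g \<in> M\<close> \<open>g \<notin> A i\<close> by (simp add: nonzero_marginal_def)
    have Bi: "B i = A i \<union> {g}" and Bj: "B j = A j - {g}"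
      and Bk: "\<And>k. k \<noteq> i \<Longrightarrow> k \<noteq> j \<Longrightarrow> B k = A k"
      using \<open>i \<noteq> j\<close> by (simp_all add: B_def)
    have "leximin_less n (\<lambda>_. v) A B"
    proof (rule leximin_less_if_raised[where j = i])
      show "v (B k) = v (A k)" if "k < n" "v (A k) < v (A i)" for k
      proof -
        have "k \<noteq> i" "k \<noteq> j"
          using that envy removed_le by auto
        then show ?thesis by (simp add: Bk)
      qed
      show "v (B k) = v (A k)" if "k < n" "v (B k) \<le> v (A i)" for k
      proof -
        have "k \<noteq> i" "k \<noteq> j"
          using that envy gain Bi Bj by auto
        then show ?thesis by (simp add: Bk)
      qed
      show "i < n" "v (A i) = v (A i)" "v (A i) < v (B i)"
        using \<open>i < n\<close> gain Bi by simp_all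
    qed
    with leximin B show False
      by (simp add: leximin_not_less)
  qed
qed

theorem theorem5p4:
  fixes n :: nat and M :: "'g set" and v :: "'g set \<Rightarrow> real" and A :: "nat \<Rightarrow> 'g set"
  assumes "n \<ge> 1"
    and "finite M"
    and "valuation M v"
    and "nonzero_marginal M v"
    and "leximin n M (\<lambda>_. v) A"
  shows "EFX n (\<lambda>_. v) A \<and> pareto_optimal n M (\<lambda>_. v) A"
  using leximin_imp_EFX[OF assms(3-5)] leximin_imp_pareto_optimal[OF assms(5)] ..

end
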